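(* Let $n$ and $k$ be positive integers with $k \le n$, let $M$ be a matroid of rank $n$ with rank function $r$, and let $B_1, \dots, B_k$ be bases of $M$ (not necessarily disjoint). Let $\alpha = 3\lceil \log n\rceil$. Let $Q(B_1,\dots,B_k)$ denote the probability that, when $\alpha$-element subsets $S_1 \subseteq B_1, \dots, S_k \subseteq B_k$ are chosen independently, each uniformly at random, one has $r(S_1 \cup \cdots \cup S_k) < k$. Let $Q_{k,n}$ denote the probability that, when $\alpha$-element subsets $S_1, \dots, S_k$ of $\{1,\dots,n\}$ are chosen independently and uniformly at random, one has $|S_1 \cup \cdots \cup S_k| < k$. Then $Q(B_1,\dots,B_k) \le Q_{k,n}$.
   Context: Here $\log$ denotes the natural logarithm. *)

theory Defs
  imports Complex_Main "HOL-Library.FuncSet"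
begin

definition matroid :: "'a set \<Rightarrow> ('a set \<Rightarrow> bool) \<Rightarrow> bool" where
  "matroid E indep \<longleftrightarrow>
     finite E \<and>
     (\<forall>X. indep X \<longrightarrow> X \<subseteq> E) \<and>
     indep {} \<and>
     (\<forall>X Y. indep Y \<and> X \<subseteq> Y \<longrightarrow> indep X) \<and>
     (\<forall>X Y. indep X \<and> indep Y \<and> card X < card Y \<longrightarrow> (\<exists>y \<in> Y - X. indep (insert y X)))"

definition mrank :: "('a set \<Rightarrow> bool) \<Rightarrow> 'a set \<Rightarrow> nat" where
  "mrank indep X = Max {card I | I. I \<subseteq> X \<and> indep I}"

definition mbasis :: "('a set \<Rightarrow> bool) \<Rightarrow> 'a set \<Rightarrow> bool" where
  "mbasis indep B \<longleftrightarrow> indep B \<and> (\<forall>C. indep C \<and> B \<subseteq> C \<longrightarrow> C = B)"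

definition alpha :: "nat \<Rightarrow> nat" where
  "alpha n = 3 * nat \<lceil>ln (real n)\<rceil>"

text \<open>Probability that P holds for a uniformly random tuple (S_0,...,S_{k-1}) with S_i
  chosen independently and uniformly from C i (uniform measure on the finite product).\<close>
definition tuple_prob :: "nat \<Rightarrow> (nat \<Rightarrow> 'b set set) \<Rightarrow> ((nat \<Rightarrow> 'b set) \<Rightarrow> bool) \<Rightarrow> real" where
  "tuple_prob k C P =
     real (card {S \<in> PiE {..<k} C. P S}) / real (card (PiE {..<k} C))"

definition Q_matroid :: "('a set \<Rightarrow> bool) \<Rightarrow> (nat \<Rightarrow> 'a set) \<Rightarrow> nat \<Rightarrow> nat \<Rightarrow> real" where
  "Q_matroid indep B k a =
     tuple_prob k (\<lambda>i. {S. S \<subseteq> B i \<and> card S = a}) (\<lambda>S. mrank indep (\<Union>i<k. S i) < k)"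

definition Q_uniform :: "nat \<Rightarrow> nat \<Rightarrow> nat \<Rightarrow> real" where
  "Q_uniform k n a =
     tuple_prob k (\<lambda>i. {S. S \<subseteq> {1..n} \<and> card S = a}) (\<lambda>S. card (\<Union>i<k. S i) < k)"

end

theory Submission
  imports Defs
begin

text \<open>Couple the two experiments one basis at a time. Suppose the sets drawn so far have union X
  on the matroid side and Y on the uniform side, with \<open>card Y \<le> r(X)\<close>. Extend a maximal independent
  subset I of X by a part B' of the next basis \<open>B\<^sub>j\<close> to a basis, and enlarge Y to a set Y' of size
  \<open>r(X)\<close>. A bijection \<open>h : B\<^sub>j \<rightarrow> {1..n}\<close> sending \<open>B\<^sub>j - B'\<close> onto Y' satisfies
  \<open>card (Y \<union> h T) \<le> card Y' + card (T \<inter> B') = card (I \<union> (T \<inter> B')) \<le> r(X \<union> T)\<close> for every \<open>T \<subseteq> B\<^sub>j\<close>,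
  so the invariant survives the step, and the uniform measure on \<open>\<alpha>\<close>-subsets is transported by h.
  Hence the matroid event is counted by fewer tuples, while both sample spaces have
  \<open>(n choose \<alpha>)^k\<close> elements.\<close>

abbreviation ksubsets :: "'b set \<Rightarrow> nat \<Rightarrow> 'b set set" where
  "ksubsets A a \<equiv> {T. T \<subseteq> A \<and> card T = a}"

lemma matroid_indep_finite:
  assumes "matroid E indep" "indep I"
  shows "finite I"
  using assms unfolding matroid_def by (meson finite_subset)

lemma matroid_indep_subset:
  assumes "matroid E indep" "indep J" "I \<subseteq> J"
  shows "indep I"
  using assms unfolding matroid_def by blast

lemma finite_indep_cards:
  assumes "matroid E indep"
  shows "finite {card I | I. I \<subseteq> X \<and> indep I}"
proof -
  have "{card I | I. I \<subseteq> X \<and> indep I} \<subseteq> {0..card E}"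
    using assms unfolding matroid_def by (auto intro!: card_mono)
  then show ?thesis
    using finite_subset by blast
qed

lemma card_le_mrank:
  assumes "matroid E indep" "I \<subseteq> X" "indep I"
  shows "card I \<le> mrank indep X"
  unfolding mrank_def using assms finite_indep_cards[OF assms(1)] by (intro Max_ge) auto

lemma mrank_witness:
  assumes "matroid E indep"
  obtains I where "I \<subseteq> X" "indep I" "card I = mrank indep X"
proof -
  have "{card I | I. I \<subseteq> X \<and> indep I} \<noteq> {}"
    using assms unfolding matroid_def by auto
  then have "mrank indep X \<in> {card I | I. I \<subseteq> X \<and> indep I}"
    unfolding mrank_def using Max_in finite_indep_cards[OF assms] by blast
  then show ?thesis
    using that by auto
qed

lemma mrank_le_mrank_ground:
  assumes M: "matroid E indep"
  shows "mrank indep X \<le> mrank indep E"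
proof -
  obtain I where "indep I" "card I = mrank indep X"
    using mrank_witness[OF M] by metis
  moreover have "I \<subseteq> E"
    using M \<open>indep I\<close> unfolding matroid_def by blast
  ultimately show ?thesis
    using card_le_mrank[OF M] by metis
qed

lemma mbasis_card:
  assumes M: "matroid E indep" and B: "mbasis indep B"
  shows "card B = mrank indep E"
proof (rule ccontr)
  obtain J where J: "J \<subseteq> E" "indep J" "card J = mrank indep E"
    using mrank_witness[OF M] by blast
  have "indep B" "B \<subseteq> E"
    using B M unfolding mbasis_def matroid_def by auto
  moreover assume "card B \<noteq> mrank indep E"
  ultimately have "card B < card J"
    using card_le_mrank[OF M, of B E] J(3) by linarith
  then obtain y where "y \<in> J - B" "indep (insert y B)"
    using M \<open>indep B\<close> J unfolding matroid_def by blast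
  then show False
    using B unfolding mbasis_def by blast
qed

lemma indep_augment:
  assumes M: "matroid E indep" and "indep I" "indep B" "card I \<le> card B"
  shows "\<exists>B'. B' \<subseteq> B - I \<and> indep (I \<union> B') \<and> card B' = card B - card I"
  using assms(2,4)
proof (induction "card B - card I" arbitrary: I rule: less_induct)
  case less
  show ?case
  proof (cases "card I < card B")
    case False
    then show ?thesis
      using less.prems(1) by (intro exI[of _ "{}"]) simp
  next
    case True
    then obtain y where y: "y \<in> B - I" "indep (insert y I)"
      using M less.prems(1) \<open>indep B\<close> unfolding matroid_def by blast
    have card_insert: "card (insert y I) = Suc (card I)"
      using y matroid_indep_finite[OF M less.prems(1)] by simp
    have "card B - card (insert y I) < card B - card I" "card (insert y I) \<le> card B"
      using card_insert True by linarith+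
    then obtain B'' where B'': "B'' \<subseteq> B - insert y I" "indep (insert y I \<union> B'')"
        "card B'' = card B - card (insert y I)"
      using less.hyps y(2) by blast
    have "finite B''" "y \<notin> B''"
      using B''(1) matroid_indep_finite[OF M \<open>indep B\<close>] finite_subset by blast+
    then have "card (insert y B'') = card B - card I"
      using B''(3) card_insert True by simp
    moreover have "I \<union> insert y B'' = insert y I \<union> B''"
      by blast
    moreover have "insert y B'' \<subseteq> B - I"
      using B''(1) y(1) by blast
    ultimately show ?thesis
      using B''(2) by metis
  qed
qed

lemma bij_betw_extending:
  assumes "finite A" "finite N" "card A = card N" "A' \<subseteq> A" "N' \<subseteq> N" "card A' = card N'"
  obtains h where "bij_betw h A N" "h ` A' = N'"
proof -
  have fin: "finite A'" "finite N'"
    using assms finite_subset by blast+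
  obtain f where f: "bij_betw f A' N'"
    using finite_same_card_bij fin assms(6) by blast
  have "card (A - A') = card (N - N')"
    using assms fin by (simp add: card_Diff_subset)
  then obtain g where g: "bij_betw g (A - A') (N - N')"
    using finite_same_card_bij assms(1,2) by blast
  define h where "h x = (if x \<in> A' then f x else g x)" for x
  have "bij_betw h A' N'"
    using f by (rule bij_betw_cong[THEN iffD1, rotated]) (simp add: h_def)
  moreover have "bij_betw h (A - A') (N - N')"
    using g by (rule bij_betw_cong[THEN iffD1, rotated]) (simp add: h_def)
  ultimately have "bij_betw h (A' \<union> (A - A')) (N' \<union> (N - N'))"
    by (rule bij_betw_combine) auto
  moreover have "A' \<union> (A - A') = A" "N' \<union> (N - N') = N"
    using assms by auto
  ultimately show ?thesis
    using that \<open>bij_betw h A' N'\<close> by (simp add: bij_betw_def)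
qed

lemma bij_betw_image_ksubsets:
  assumes h: "bij_betw h A N"
  shows "bij_betw (image h) (ksubsets A a) (ksubsets N a)"
proof (rule bij_betw_subset[OF bij_betw_image_Pow[OF h]])
  have card_image_sub: "card (h ` T) = card T" if "T \<subseteq> A" for T
    using h that by (meson bij_betw_imp_inj_on card_image inj_on_subset)
  show "image h ` ksubsets A a = ksubsets N a"
  proof (intro equalityI subsetI)
    fix U assume "U \<in> image h ` ksubsets A a"
    then show "U \<in> ksubsets N a"
      using h card_image_sub by (auto simp: bij_betw_def)
  next
    fix U assume U: "U \<in> ksubsets N a"
    then obtain T where "T \<subseteq> A" "U = h ` T"
      using h by (auto simp: bij_betw_def elim!: subset_imageE)
    then show "U \<in> image h ` ksubsets A a"
      using U card_image_sub by auto
  qed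
qed auto

lemma rank_coupling:
  assumes M: "matroid E indep" and B: "mbasis indep B"
    and N: "finite N" "card N = card B" and Y: "Y \<subseteq> N" "card Y \<le> mrank indep X"
  obtains h where "bij_betw h B N" "\<And>T. T \<subseteq> B \<Longrightarrow> card (Y \<union> h ` T) \<le> mrank indep (X \<union> T)"
proof -
  obtain I where I: "I \<subseteq> X" "indep I" "card I = mrank indep X"
    using mrank_witness[OF M] by blast
  have "indep B" "finite B"
    using B matroid_indep_finite[OF M] unfolding mbasis_def by auto
  have rank_le: "card I \<le> card B"
    using I(3) mrank_le_mrank_ground[OF M] mbasis_card[OF M B] by simp
  obtain B' where B': "B' \<subseteq> B - I" "indep (I \<union> B')" "card B' = card B - card I"
    using indep_augment[OF M I(2) \<open>indep B\<close> rank_le] by blast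
  obtain Y' where Y': "Y \<subseteq> Y'" "Y' \<subseteq> N" "card Y' = card I"
    using exists_subset_between[of Y "card I" N] Y N rank_le I(3) by auto
  have card_eq: "card (B - B') = card Y'"
  proof -
    have "B' \<subseteq> B" "finite B'"
      using B'(1) \<open>finite B\<close> finite_subset by blast+
    then show ?thesis
      using B'(3) Y'(3) rank_le by (simp add: card_Diff_subset)
  qed
  obtain h where h: "bij_betw h B N" "h ` (B - B') = Y'"
    by (rule bij_betw_extending[OF \<open>finite B\<close> N(1) N(2)[symmetric] _ Y'(2) card_eq]) blast
  have "card (Y \<union> h ` T) \<le> mrank indep (X \<union> T)" if T: "T \<subseteq> B" for T
  proof -
    have fin: "finite T" "finite Y'" "finite I"
      using T Y'(2) \<open>finite B\<close> N(1) matroid_indep_finite[OF M I(2)] finite_subset by blast+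
    have "Y \<union> h ` T \<subseteq> Y' \<union> h ` (T \<inter> B')"
      using Y'(1) h(2) T by blast
    then have "card (Y \<union> h ` T) \<le> card (Y' \<union> h ` (T \<inter> B'))"
      using fin by (intro card_mono) auto
    also have "\<dots> \<le> card Y' + card (h ` (T \<inter> B'))"
      by (rule card_Un_le)
    also have "\<dots> \<le> card Y' + card (T \<inter> B')"
      using card_image_le[of "T \<inter> B'" h] fin(1) by simp
    also have "\<dots> = card (I \<union> (T \<inter> B'))"
    proof -
      have "I \<inter> (T \<inter> B') = {}"
        using B'(1) by blast
      with fin show ?thesis
        using Y'(3) by (simp add: card_Un_disjoint)
    qed
    also have "\<dots> \<le> mrank indep (X \<union> T)"
    proof (rule card_le_mrank[OF M])
      show "I \<union> (T \<inter> B') \<subseteq> X \<union> T"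
        using I(1) by blast
      show "indep (I \<union> (T \<inter> B'))"
        by (rule matroid_indep_subset[OF M B'(2)]) blast
    qed
    finally show ?thesis .
  qed
  with h(1) show ?thesis
    using that by blast
qed

lemma card_PiE_lessThan_Suc_Union:
  assumes "\<And>i. i \<le> j \<Longrightarrow> finite (C i)"
  shows "card {S \<in> PiE {..<Suc j} C. P (\<Union>i<Suc j. S i)}
       = (\<Sum>T\<in>C j. card {S \<in> PiE {..<j} C. P (T \<union> (\<Union>i<j. S i))})"
proof -
  let ?extend = "\<lambda>(T, S). S(j := T)"
  let ?A = "SIGMA T:C j. {S \<in> PiE {..<j} C. P (T \<union> (\<Union>i<j. S i))}"
  have "(\<Union>i<Suc j. (S(j := T)) i) = T \<union> (\<Union>i<j. S i)" for S T
    by (auto simp: lessThan_Suc)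
  then have "{S \<in> PiE {..<Suc j} C. P (\<Union>i<Suc j. S i)} = ?extend ` ?A"
    by (auto simp: lessThan_Suc PiE_insert_eq)
  moreover have "inj_on ?extend ?A"
    by (rule inj_on_subset[OF inj_combinator[of j "{..<j}" C]]) auto
  moreover have "finite (C j)" "\<forall>T\<in>C j. finite {S \<in> PiE {..<j} C. P (T \<union> (\<Union>i<j. S i))}"
    using assms by (auto intro!: finite_PiE finite_subset[OF _ finite_PiE[of "{..<j}" C]])
  ultimately show ?thesis
    by (simp add: card_image card_SigmaI)
qed

lemma card_rank_deficient_le_card_deficient:
  assumes M: "matroid E indep" and bases: "\<forall>i<k. mbasis indep (B i)"
    and N: "finite N" "card N = mrank indep E"
  shows "j \<le> k \<Longrightarrow> Y \<subseteq> N \<Longrightarrow> card Y \<le> mrank indep X \<Longrightarrow>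
    card {S \<in> PiE {..<j} (\<lambda>i. ksubsets (B i) a). mrank indep (X \<union> (\<Union>i<j. S i)) < k}
    \<le> card {S \<in> PiE {..<j} (\<lambda>i. ksubsets N a). card (Y \<union> (\<Union>i<j. S i)) < k}"
proof (induction j arbitrary: X Y)
  case 0
  then show ?case
    by (cases "mrank indep X < k"; cases "card Y < k") auto
next
  case (Suc j)
  have "mbasis indep (B j)" and fin_B: "\<And>i. i \<le> j \<Longrightarrow> finite (ksubsets (B i) a)"
    using Suc.prems(1) bases matroid_indep_finite[OF M] unfolding mbasis_def by auto
  have fin_N: "finite (ksubsets N a)"
    using N(1) by simp
  obtain h where h: "bij_betw h (B j) N" "\<And>T. T \<subseteq> B j \<Longrightarrow> card (Y \<union> h ` T) \<le> mrank indep (X \<union> T)"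
    using rank_coupling[OF M \<open>mbasis indep (B j)\<close> N(1) _ Suc.prems(2,3)]
      mbasis_card[OF M \<open>mbasis indep (B j)\<close>] N(2) by metis
  have "card {S \<in> PiE {..<Suc j} (\<lambda>i. ksubsets (B i) a). mrank indep (X \<union> (\<Union>i<Suc j. S i)) < k}
    = (\<Sum>T\<in>ksubsets (B j) a.
        card {S \<in> PiE {..<j} (\<lambda>i. ksubsets (B i) a). mrank indep ((X \<union> T) \<union> (\<Union>i<j. S i)) < k})"
    using card_PiE_lessThan_Suc_Union[where P = "\<lambda>U. mrank indep (X \<union> U) < k", OF fin_B]
    by (simp add: Un_assoc)
  also have "\<dots> \<le> (\<Sum>T\<in>ksubsets (B j) a.
        card {S \<in> PiE {..<j} (\<lambda>i. ksubsets N a). card ((Y \<union> h ` T) \<union> (\<Union>i<j. S i)) < k})"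
  proof (rule sum_mono)
    fix T assume "T \<in> ksubsets (B j) a"
    then have "Y \<union> h ` T \<subseteq> N" "card (Y \<union> h ` T) \<le> mrank indep (X \<union> T)"
      using Suc.prems(2) h bij_betw_imp_surj_on[OF h(1)] by auto
    then show "card {S \<in> PiE {..<j} (\<lambda>i. ksubsets (B i) a). mrank indep ((X \<union> T) \<union> (\<Union>i<j. S i)) < k}
      \<le> card {S \<in> PiE {..<j} (\<lambda>i. ksubsets N a). card ((Y \<union> h ` T) \<union> (\<Union>i<j. S i)) < k}"
      using Suc.IH Suc.prems(1) by simp
  qed
  also have "\<dots> = (\<Sum>U\<in>ksubsets N a.
        card {S \<in> PiE {..<j} (\<lambda>i. ksubsets N a). card ((Y \<union> U) \<union> (\<Union>i<j. S i)) < k})"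
    by (rule sum.reindex_bij_betw[OF bij_betw_image_ksubsets[OF h(1)]])
  also have "\<dots> = card {S \<in> PiE {..<Suc j} (\<lambda>i. ksubsets N a). card (Y \<union> (\<Union>i<Suc j. S i)) < k}"
    using card_PiE_lessThan_Suc_Union[where P = "\<lambda>U. card (Y \<union> U) < k", OF fin_N]
    by (simp add: Un_assoc)
  finally show ?case .
qed

lemma card_PiE_ksubsets:
  assumes "\<And>i. i < k \<Longrightarrow> finite (A i) \<and> card (A i) = n"
  shows "card (PiE {..<k} (\<lambda>i. ksubsets (A i) a)) = (n choose a) ^ k"
proof -
  have "(\<Prod>i<k. card (ksubsets (A i) a)) = (\<Prod>i<k. n choose a)"
    using assms by (intro prod.cong) (simp_all add: n_subsets)
  then show ?thesis
    by (simp add: card_PiE)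
qed

theorem lemma1p5:
  fixes E :: "'a set" and indep :: "'a set \<Rightarrow> bool" and n k :: nat and B :: "nat \<Rightarrow> 'a set"
  assumes "0 < n" and "0 < k" and "k \<le> n"
    and "matroid E indep"
    and "mrank indep E = n"
    and "\<forall>i<k. mbasis indep (B i)"
  shows "Q_matroid indep B k (alpha n) \<le> Q_uniform k n (alpha n)"
proof -
  have "card {S \<in> PiE {..<k} (\<lambda>i. ksubsets (B i) (alpha n)). mrank indep (\<Union>i<k. S i) < k}
      \<le> card {S \<in> PiE {..<k} (\<lambda>i. ksubsets {1..n} (alpha n)). card (\<Union>i<k. S i) < k}"
    using card_rank_deficient_le_card_deficient[OF assms(4,6), of "{1..n}" k "{}" "{}"] assms(5)
    by simp
  moreover have "card (PiE {..<k} (\<lambda>i. ksubsets (B i) (alpha n))) = (n choose alpha n) ^ k"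
  proof (rule card_PiE_ksubsets)
    fix i assume "i < k"
    then have "mbasis indep (B i)"
      using assms(6) by blast
    moreover from this have "indep (B i)"
      unfolding mbasis_def by blast
    ultimately show "finite (B i) \<and> card (B i) = n"
      using matroid_indep_finite[OF assms(4)] mbasis_card[OF assms(4)] assms(5) by simp
  qed
  moreover have "card (PiE {..<k} (\<lambda>i. ksubsets {1..n} (alpha n))) = (n choose alpha n) ^ k"
    by (intro card_PiE_ksubsets) simp
  ultimately show ?thesis
    unfolding Q_matroid_def Q_uniform_def tuple_prob_def by (simp add: divide_right_mono)
qed

end
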